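(* Let $R$ be a commutative Noetherian ring with non-zero identity. Let $\mathcal{P} \subset R$ be a finite subset and $I = (\mathcal{P})$. Let $\mathcal{P}_0, \mathcal{P}_1, \ldots, \mathcal{P}_r$ be subsets of $\mathcal{P}$ satisfying: (B1) $\mathcal{P} = \mathcal{P}_0 \cup \mathcal{P}_1 \cup \cdots \cup \mathcal{P}_r$; (B2) $\mathcal{P}_0$ has exactly one element; (B3) for each $\ell$ with $0 < \ell \le r$ and every $a, a'' \in \mathcal{P}_\ell$ with $a \ne a''$, there exists an integer $m \ge 1$ such that $(a a'')^m \in (\mathcal{P}_0 \cup \cdots \cup \mathcal{P}_{\ell-1}) I^{2m-1}$, where $(\mathcal{P}_0 \cup \cdots \cup \mathcal{P}_{\ell-1})$ denotes the ideal generated by this set. Set $g_\ell = \sum_{a \in \mathcal{P}_\ell} a$ for $\ell = 0, 1, \ldots, r$. Then $J = (g_0, g_1, \ldots, g_r)$ is a reduction of $I$.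
   Context: An ideal $J \subseteq I$ is called a reduction of $I$ if there exists an integer $s \ge 1$ such that $I^{s+1} = J I^s$. *)

theory Defs
  imports "HOL-Algebra.Ideal_Product" "HOL-Algebra.Ring_Divisibility"
begin

definition ideal_pow :: "('a, 'b) ring_scheme \<Rightarrow> 'a set \<Rightarrow> nat \<Rightarrow> 'a set" where
  "ideal_pow R I n = ((\<lambda>X. ideal_prod R I X) ^^ n) (carrier R)"

definition is_reduction :: "('a, 'b) ring_scheme \<Rightarrow> 'a set \<Rightarrow> 'a set \<Rightarrow> bool" where
  "is_reduction R J I \<longleftrightarrow> ideal J R \<and> J \<subseteq> I \<and>
     (\<exists>s::nat. s \<ge> 1 \<and> ideal_pow R I (Suc s) = ideal_prod R J (ideal_pow R I s))"

end

theory Submission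
  imports Defs
begin

text \<open>
  Let \<open>Q\<^sub>l\<close> be the ideal generated by \<open>P\<^sub>0 \<union> \<dots> \<union> P\<^sub>l\<close> and \<open>J\<^sub>l = (g\<^sub>0, \<dots>, g\<^sub>l)\<close>, and call \<open>A\<close> a
  reduction of \<open>X\<close> relative to \<open>B\<close> if \<open>X\<^sup>n\<^sup>+\<^sup>1 \<subseteq> A B\<^sup>n\<close> for some \<open>n\<close> (for \<open>A \<subseteq> X = B\<close> the usual
  notion). By induction on \<open>l\<close>, \<open>J\<^sub>l\<close> is a reduction of \<open>Q\<^sub>l\<close> relative to \<open>I\<close>; for \<open>l = r\<close> this is
  the claim. Relative reductions are stable under sums of ideals (binomial expansion), so it
  suffices to treat each \<open>a \<in> P\<^sub>l\<close>. Now \<open>a\<^sup>2 = a g\<^sub>l - \<Sum>\<^bsub>t \<noteq> a\<^esub> a t\<close>: the product \<open>a g\<^sub>l\<close> lies in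
  \<open>J\<^sub>l I\<close>, and by (B3) each \<open>a t\<close> is integral over \<open>Q\<^sub>l\<^sub>-\<^sub>1 I\<close> in the grading by \<open>I\<^sup>2\<close>, so it
  inherits the relative bound of \<open>Q\<^sub>l\<^sub>-\<^sub>1\<close>. Hence \<open>J\<^sub>l I\<close> is a reduction of \<open>(a)\<^sup>2\<close> relative to
  \<open>I\<^sup>2\<close>, and \<open>J\<^sub>l\<close> one of \<open>(a)\<close> relative to \<open>I\<close>.
\<close>

definition relative_reduction :: "('a, 'b) ring_scheme \<Rightarrow> 'a set \<Rightarrow> 'a set \<Rightarrow> 'a set \<Rightarrow> bool" where
  "relative_reduction R A B X \<longleftrightarrow> (\<exists>n. ideal_pow R X (Suc n) \<subseteq> ideal_prod R A (ideal_pow R B n))"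

context cring begin

lemma ideal_subset_carrier: "ideal I R \<Longrightarrow> I \<subseteq> carrier R"
  using additive_subgroup.a_subset ideal.axioms(1) by blast

lemma ideal_pow_0 [simp]: "ideal_pow R X 0 = carrier R"
  by (simp add: ideal_pow_def)

lemma ideal_pow_Suc: "ideal_pow R X (Suc n) = X \<cdot> ideal_pow R X n"
  by (simp add: ideal_pow_def)

lemma ideal_pow_is_ideal: "ideal X R \<Longrightarrow> ideal (ideal_pow R X n) R"
  by (induct n) (simp_all add: ideal_pow_Suc oneideal ideal_prod_is_ideal)

lemma ideal_pow_eq_nat_pow:
  assumes "ideal X R"
  shows "ideal_pow R X n = X [^]\<^bsub>ideals_set R\<^esub> n"
proof (induct n)
  case 0
  then show ?case by (simp add: ideals_set_def)
next
  case (Suc n)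
  then show ?case
    using assms ideal_prod_commute[OF assms ideal_pow_is_ideal[OF assms, of n]]
    by (simp add: ideal_pow_Suc ideals_set_def)
qed

lemma ideals_set_is_monoid: "monoid (ideals_set R)"
  using ideals_set_is_comm_monoid comm_monoid.axioms(1) by blast

lemma ideal_pow_add:
  assumes "ideal X R"
  shows "ideal_pow R X (m + n) = ideal_pow R X m \<cdot> ideal_pow R X n"
  using monoid.nat_pow_mult[OF ideals_set_is_monoid, of X m n] assms
  by (simp add: ideal_pow_eq_nat_pow ideals_set_def)

lemma ideal_pow_mult:
  assumes "ideal X R"
  shows "ideal_pow R (ideal_pow R X m) n = ideal_pow R X (m * n)"
  using monoid.nat_pow_pow[OF ideals_set_is_monoid, of X m n] assms ideal_pow_is_ideal[OF assms]
  by (simp add: ideal_pow_eq_nat_pow ideals_set_def)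

lemma ideal_pow_prod_distrib:
  assumes "ideal X R" "ideal Y R"
  shows "ideal_pow R (X \<cdot> Y) n = ideal_pow R X n \<cdot> ideal_pow R Y n"
  using monoid.pow_mult_distrib[OF ideals_set_is_monoid, of X Y n] assms
    ideal_prod_commute[OF assms] ideal_prod_is_ideal[OF assms]
  by (simp add: ideal_pow_eq_nat_pow ideals_set_def)

lemma ideal_pow_1: "ideal X R \<Longrightarrow> ideal_pow R X 1 = X"
  by (simp add: ideal_pow_Suc ideal_prod_one)

lemma ideal_prod_mono: "X \<subseteq> X' \<Longrightarrow> Y \<subseteq> Y' \<Longrightarrow> X \<cdot> Y \<subseteq> X' \<cdot> Y'"
proof
  fix s assume "X \<subseteq> X'" "Y \<subseteq> Y'" and "s \<in> X \<cdot> Y"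
  from \<open>s \<in> X \<cdot> Y\<close> show "s \<in> X' \<cdot> Y'"
    by (induct s rule: ideal_prod.induct)
       (use \<open>X \<subseteq> X'\<close> \<open>Y \<subseteq> Y'\<close> in \<open>auto intro: ideal_prod.prod ideal_prod.sum\<close>)
qed

lemma ideal_pow_mono: "X \<subseteq> Y \<Longrightarrow> ideal_pow R X n \<subseteq> ideal_pow R Y n"
  by (induct n) (simp_all add: ideal_pow_Suc ideal_prod_mono)

lemma ideal_prod_subset_ideal:
  assumes C: "ideal C R" and "\<And>x y. x \<in> X \<Longrightarrow> y \<in> Y \<Longrightarrow> x \<otimes> y \<in> C"
  shows "X \<cdot> Y \<subseteq> C"
proof
  fix s assume "s \<in> X \<cdot> Y"
  then show "s \<in> C"
    by (induct s rule: ideal_prod.induct)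
       (auto simp: assms(2) intro: additive_subgroup.a_closed[OF ideal.axioms(1)[OF C]])
qed

lemma finsum_in_ideal:
  assumes C: "ideal C R" and "finite T" and "\<And>t. t \<in> T \<Longrightarrow> f t \<in> C"
  shows "finsum R f T \<in> C"
  using assms(2,3)
proof (induct T rule: finite_induct)
  case empty
  then show ?case using C by (simp add: additive_subgroup.zero_closed ideal.axioms(1))
next
  case (insert x F)
  then have "f \<in> F \<rightarrow> carrier R" "f x \<in> carrier R"
    using ideal.Icarr[OF C] by auto
  with insert show ?case
    by (simp add: finsum_insert additive_subgroup.a_closed[OF ideal.axioms(1)[OF C]])
qed

lemma genideal_of_ideal: "ideal I R \<Longrightarrow> Idl I = I"
  by (meson genideal_minimal genideal_self ideal.axioms(1) additive_subgroup.a_subset subset_antisym order_refl)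

lemma genideal_singleton_prod:
  assumes "x \<in> carrier R" "y \<in> carrier R"
  shows "(Idl {x}) \<cdot> (Idl {y}) = Idl {x \<otimes> y}"
proof -
  have "(Idl {x}) \<cdot> (Idl {y}) = Idl (PIdl x <#> PIdl y)"
    using assms by (simp add: ideal_prod_eq_genideal genideal_ideal cgenideal_eq_genideal[symmetric] cgenideal_ideal)
  also have "\<dots> = Idl (PIdl (x \<otimes> y))"
    using assms by (simp add: cgenideal_prod)
  also have "\<dots> = Idl {x \<otimes> y}"
    using assms by (simp add: cgenideal_eq_genideal genideal_ideal genideal_of_ideal)
  finally show ?thesis .
qed

lemma ideal_pow_genideal_singleton:
  "x \<in> carrier R \<Longrightarrow> ideal_pow R (Idl {x}) n = Idl {x [^] n}"
  by (induct n) (simp_all add: genideal_one ideal_pow_Suc genideal_singleton_prod m_comm)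

lemma genideal_union:
  assumes "S \<subseteq> carrier R" "T \<subseteq> carrier R"
  shows "Idl (S \<union> T) = Idl S <+>\<^bsub>R\<^esub> Idl T"
proof -
  have "Idl (S \<union> T) = Idl (Idl S \<union> Idl T)"
  proof (rule equalityI)
    show "Idl (S \<union> T) \<subseteq> Idl (Idl S \<union> Idl T)"
      using assms genideal_self by (intro subset_Idl_subset) (auto intro: genideal_ideal ideal.Icarr)
    show "Idl (Idl S \<union> Idl T) \<subseteq> Idl (S \<union> T)"
      using assms subset_Idl_subset[of "S \<union> T" S] subset_Idl_subset[of "S \<union> T" T]
      by (intro genideal_minimal genideal_ideal) auto
  qed
  then show ?thesis
    using assms by (simp add: union_genideal genideal_ideal)
qed

lemma ideal_colon_is_ideal:
  assumes C: "ideal C R" and X: "X \<subseteq> carrier R"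
  shows "ideal {u \<in> carrier R. \<forall>x\<in>X. x \<otimes> u \<in> C} R"
proof -
  have C': "additive_subgroup C R" using C ideal.axioms(1) by blast
  show ?thesis
  proof (rule idealI)
    show "ring R" by (rule ring_axioms)
    show "subgroup {u \<in> carrier R. \<forall>x\<in>X. x \<otimes> u \<in> C} (add_monoid R)"
    proof (rule subgroup.intro)
      show "\<And>u v. u \<in> {u \<in> carrier R. \<forall>x\<in>X. x \<otimes> u \<in> C} \<Longrightarrow>
          v \<in> {u \<in> carrier R. \<forall>x\<in>X. x \<otimes> u \<in> C} \<Longrightarrow>
          u \<otimes>\<^bsub>add_monoid R\<^esub> v \<in> {u \<in> carrier R. \<forall>x\<in>X. x \<otimes> u \<in> C}"
        using X by (auto simp: r_distr additive_subgroup.a_closed[OF C'] subset_iff)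
      show "\<one>\<^bsub>add_monoid R\<^esub> \<in> {u \<in> carrier R. \<forall>x\<in>X. x \<otimes> u \<in> C}"
        using X by (auto simp: additive_subgroup.zero_closed[OF C'] subset_iff)
      show "\<And>u. u \<in> {u \<in> carrier R. \<forall>x\<in>X. x \<otimes> u \<in> C} \<Longrightarrow>
          inv\<^bsub>add_monoid R\<^esub> u \<in> {u \<in> carrier R. \<forall>x\<in>X. x \<otimes> u \<in> C}"
        using X by (auto simp: a_inv_def[symmetric] r_minus additive_subgroup.a_inv_closed[OF C'] subset_iff)
    qed auto
    show "\<And>a x. a \<in> {u \<in> carrier R. \<forall>x\<in>X. x \<otimes> u \<in> C} \<Longrightarrow> x \<in> carrier R \<Longrightarrow>
        x \<otimes> a \<in> {u \<in> carrier R. \<forall>x\<in>X. x \<otimes> u \<in> C}"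
      using X C by (auto simp: m_lcomm subset_iff ideal.I_l_closed)
    show "\<And>a x. a \<in> {u \<in> carrier R. \<forall>x\<in>X. x \<otimes> u \<in> C} \<Longrightarrow> x \<in> carrier R \<Longrightarrow>
        a \<otimes> x \<in> {u \<in> carrier R. \<forall>x\<in>X. x \<otimes> u \<in> C}"
      using X C by (auto simp: m_assoc[symmetric] subset_iff ideal.I_r_closed)
  qed
qed

lemma ideal_prod_subset_iff_colon:
  assumes "ideal C R" "W \<subseteq> carrier R"
  shows "X \<cdot> W \<subseteq> C \<longleftrightarrow> W \<subseteq> {u \<in> carrier R. \<forall>x\<in>X. x \<otimes> u \<in> C}"
proof
  assume "X \<cdot> W \<subseteq> C"
  then show "W \<subseteq> {u \<in> carrier R. \<forall>x\<in>X. x \<otimes> u \<in> C}"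
    using assms(2) by (auto intro: ideal_prod.prod)
next
  assume "W \<subseteq> {u \<in> carrier R. \<forall>x\<in>X. x \<otimes> u \<in> C}"
  then show "X \<cdot> W \<subseteq> C"
    by (intro ideal_prod_subset_ideal[OF assms(1)]) blast
qed

lemma ideal_prod_left_commute:
  assumes "ideal A R" "ideal B R" "ideal C R"
  shows "A \<cdot> (B \<cdot> C) = B \<cdot> (A \<cdot> C)"
  by (simp only: ideal_prod_assoc[OF assms, symmetric] ideal_prod_commute[OF assms(1,2)]
      ideal_prod_assoc[OF assms(2,1,3)])

text \<open>Binomial expansion of \<open>(X + Y)\<^sup>k\<close>; one factor at a time is moved into a colon ideal.\<close>

lemma ideal_pow_set_add_subset:
  assumes X: "ideal X R" and Y: "ideal Y R"
  shows "ideal C R \<Longrightarrow> (\<And>i. i \<le> k \<Longrightarrow> ideal_pow R X i \<cdot> ideal_pow R Y (k - i) \<subseteq> C)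
     \<Longrightarrow> ideal_pow R (X <+>\<^bsub>R\<^esub> Y) k \<subseteq> C"
proof (induct k arbitrary: C)
  case 0
  then show ?case using 0(2)[of 0] ideal_prod_one[OF oneideal] by simp
next
  case (Suc k)
  let ?W = "ideal_pow R (X <+>\<^bsub>R\<^esub> Y) k"
  let ?M = "\<lambda>i. ideal_pow R X i \<cdot> ideal_pow R Y (k - i)"
  have W: "ideal ?W R" using ideal_pow_is_ideal[OF add_ideals[OF X Y]] .
  have M: "ideal (?M i) R" for i by (simp add: ideal_prod_is_ideal ideal_pow_is_ideal X Y)
  have carrier: "X \<subseteq> carrier R" "Y \<subseteq> carrier R" "?W \<subseteq> carrier R" "?M i \<subseteq> carrier R" for i
    using X Y W M by (simp_all add: ideal_subset_carrier)
  have "?W \<subseteq> {u \<in> carrier R. \<forall>x\<in>X. x \<otimes> u \<in> C}"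
  proof (rule Suc(1)[OF ideal_colon_is_ideal[OF Suc(2) carrier(1)]])
    fix i assume "i \<le> k"
    have "X \<cdot> ?M i = ideal_pow R X (Suc i) \<cdot> ideal_pow R Y (Suc k - Suc i)"
      using X Y by (simp add: ideal_pow_Suc ideal_prod_assoc ideal_pow_is_ideal)
    then have "X \<cdot> ?M i \<subseteq> C" using Suc(3)[of "Suc i"] \<open>i \<le> k\<close> by simp
    then show "?M i \<subseteq> {u \<in> carrier R. \<forall>x\<in>X. x \<otimes> u \<in> C}"
      by (rule ideal_prod_subset_iff_colon[OF Suc(2) carrier(4), THEN iffD1])
  qed
  then have XW: "X \<cdot> ?W \<subseteq> C" by (rule ideal_prod_subset_iff_colon[OF Suc(2) carrier(3), THEN iffD2])
  have "?W \<subseteq> {u \<in> carrier R. \<forall>x\<in>Y. x \<otimes> u \<in> C}"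
  proof (rule Suc(1)[OF ideal_colon_is_ideal[OF Suc(2) carrier(2)]])
    fix i assume "i \<le> k"
    have "Y \<cdot> ?M i = ideal_pow R X i \<cdot> ideal_pow R Y (Suc k - i)"
      using \<open>i \<le> k\<close> ideal_prod_left_commute[OF Y ideal_pow_is_ideal[OF X] ideal_pow_is_ideal[OF Y]]
      by (simp add: Suc_diff_le ideal_pow_Suc)
    then have "Y \<cdot> ?M i \<subseteq> C" using Suc(3)[of i] \<open>i \<le> k\<close> by simp
    then show "?M i \<subseteq> {u \<in> carrier R. \<forall>x\<in>Y. x \<otimes> u \<in> C}"
      by (rule ideal_prod_subset_iff_colon[OF Suc(2) carrier(4), THEN iffD1])
  qed
  then have YW: "Y \<cdot> ?W \<subseteq> C" by (rule ideal_prod_subset_iff_colon[OF Suc(2) carrier(3), THEN iffD2])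
  have "ideal_pow R (X <+>\<^bsub>R\<^esub> Y) (Suc k) = X \<cdot> ?W <+>\<^bsub>R\<^esub> Y \<cdot> ?W"
    by (simp only: ideal_pow_Suc ideal_prod_distr(2)[OF W X Y])
  also have "\<dots> = Idl (X \<cdot> ?W \<union> Y \<cdot> ?W)"
    by (rule union_genideal[symmetric]) (simp_all add: ideal_prod_is_ideal X Y W)
  also have "\<dots> \<subseteq> C" using XW YW by (simp add: genideal_minimal[OF Suc(2)])
  finally show ?case .
qed

lemma relative_reduction_of_subset:
  assumes "ideal A R" "ideal X R" "X \<subseteq> A"
  shows "relative_reduction R A B X"
  unfolding relative_reduction_def
  using assms ideal_pow_1[of X] by (intro exI[of _ 0]) (simp add: ideal_prod_one)

lemma relative_reduction_mono:
  assumes "X \<subseteq> Y" "A \<subseteq> A'" "relative_reduction R A B Y"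
  shows "relative_reduction R A' B X"
  using assms ideal_pow_mono[OF assms(1)] ideal_prod_mono[OF assms(2) order_refl]
  unfolding relative_reduction_def by blast

lemma relative_reduction_set_add:
  assumes A: "ideal A R" and B: "ideal B R" and X: "ideal X R" and Y: "ideal Y R"
    and "X \<subseteq> B" "Y \<subseteq> B"
    and "relative_reduction R A B X" "relative_reduction R A B Y"
  shows "relative_reduction R A B (X <+>\<^bsub>R\<^esub> Y)"
proof -
  obtain m n where
      hX: "ideal_pow R X (Suc m) \<subseteq> A \<cdot> ideal_pow R B m" and
      hY: "ideal_pow R Y (Suc n) \<subseteq> A \<cdot> ideal_pow R B n"
    using assms(7,8) unfolding relative_reduction_def by blast
  note ideals = A B X Y ideal_pow_is_ideal[OF X] ideal_pow_is_ideal[OF Y] ideal_pow_is_ideal[OF B]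
  have mixed: "ideal_pow R X i \<cdot> ideal_pow R Y j \<subseteq> ideal_pow R B (i + j)" for i j
    using ideal_prod_mono[OF ideal_pow_mono[OF assms(5)] ideal_pow_mono[OF assms(6)]] ideal_pow_add[OF B]
    by simp
  have "ideal_pow R X i \<cdot> ideal_pow R Y (Suc (m + n) - i) \<subseteq> A \<cdot> ideal_pow R B (m + n)"
    if "i \<le> Suc (m + n)" for i
  proof (cases "Suc m \<le> i")
    case True
    define d where "d = i - Suc m"
    have i: "i = Suc m + d" and j: "Suc (m + n) - i = n - d" and "d \<le> n"
      using True that by (auto simp: d_def)
    have "ideal_pow R X i \<cdot> ideal_pow R Y (Suc (m + n) - i)
        = ideal_pow R X (Suc m) \<cdot> (ideal_pow R X d \<cdot> ideal_pow R Y (n - d))"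
      unfolding i j using ideals by (simp add: ideal_pow_add[OF X] ideal_prod_assoc del: add_Suc)
    also have "\<dots> \<subseteq> (A \<cdot> ideal_pow R B m) \<cdot> ideal_pow R B (d + (n - d))"
      by (rule ideal_prod_mono[OF hX mixed])
    also have "\<dots> = A \<cdot> ideal_pow R B (m + n)"
      using \<open>d \<le> n\<close> ideals by (simp add: ideal_prod_assoc ideal_pow_add[OF B])
    finally show ?thesis .
  next
    case False
    define d where "d = m - i"
    have j: "Suc (m + n) - i = Suc n + d" and "i + d = m"
      using False that by (auto simp: d_def)
    have "ideal_pow R X i \<cdot> ideal_pow R Y (Suc (m + n) - i)
        = ideal_pow R Y (Suc n) \<cdot> (ideal_pow R X i \<cdot> ideal_pow R Y d)"
      unfolding j ideal_pow_add[OF Y] by (rule ideal_prod_left_commute) (simp_all add: ideals)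
    also have "\<dots> \<subseteq> (A \<cdot> ideal_pow R B n) \<cdot> ideal_pow R B (i + d)"
      by (rule ideal_prod_mono[OF hY mixed])
    also have "\<dots> = A \<cdot> ideal_pow R B (m + n)"
      using \<open>i + d = m\<close> ideals by (simp add: ideal_prod_assoc ideal_pow_add[OF B, symmetric] add.commute)
    finally show ?thesis .
  qed
  then have "ideal_pow R (X <+>\<^bsub>R\<^esub> Y) (Suc (m + n)) \<subseteq> A \<cdot> ideal_pow R B (m + n)"
    using ideals by (intro ideal_pow_set_add_subset) (simp_all add: ideal_prod_is_ideal)
  then show ?thesis unfolding relative_reduction_def by blast
qed

lemma relative_reduction_genideal:
  assumes A: "ideal A R" and B: "ideal B R" and "finite S" "S \<subseteq> B"
    and "\<And>x. x \<in> S \<Longrightarrow> relative_reduction R A B (Idl {x})"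
  shows "relative_reduction R A B (Idl S)"
  using assms(3-5)
proof (induct S rule: finite_induct)
  case empty
  then show ?case
    using A by (intro relative_reduction_of_subset) (simp_all add: genideal_ideal genideal_minimal)
next
  case (insert x S)
  have carrier: "insert x S \<subseteq> carrier R" using insert(4) ideal.Icarr[OF B] by blast
  have "Idl (insert x S) = Idl {x} <+>\<^bsub>R\<^esub> Idl S"
    using genideal_union[of "{x}" S] carrier by simp
  moreover have "Idl {x} \<subseteq> B" "Idl S \<subseteq> B"
    using insert(4) B by (simp_all add: genideal_minimal)
  ultimately show ?case
    using insert carrier by (simp add: relative_reduction_set_add[OF A B] genideal_ideal)
qed

lemma relative_reduction_prod_right:
  assumes A: "ideal A R" and B: "ideal B R" and Q: "ideal Q R" and "relative_reduction R A B Q"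
  shows "relative_reduction R (A \<cdot> B) (ideal_pow R B 2) (Q \<cdot> B)"
proof -
  obtain n where n: "ideal_pow R Q (Suc n) \<subseteq> A \<cdot> ideal_pow R B n"
    using assms(4) unfolding relative_reduction_def by blast
  note ideals = A B ideal_pow_is_ideal[OF B]
  have "ideal_pow R (Q \<cdot> B) (Suc n) = ideal_pow R Q (Suc n) \<cdot> ideal_pow R B (Suc n)"
    by (rule ideal_pow_prod_distrib[OF Q B])
  also have "\<dots> \<subseteq> (A \<cdot> ideal_pow R B n) \<cdot> ideal_pow R B (Suc n)"
    by (rule ideal_prod_mono[OF n order_refl])
  also have "\<dots> = A \<cdot> (B \<cdot> ideal_pow R B (2 * n))"
    using ideals by (simp add: ideal_prod_assoc ideal_pow_add[OF B, symmetric] ideal_pow_Suc[symmetric] mult_2)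
  also have "\<dots> = (A \<cdot> B) \<cdot> ideal_pow R (ideal_pow R B 2) n"
    using ideals by (simp add: ideal_prod_assoc ideal_pow_mult[OF B])
  finally show ?thesis unfolding relative_reduction_def by blast
qed

lemma relative_reduction_of_pow_mem:
  assumes A: "ideal A R" and B: "ideal B R" and Q: "ideal Q R" and "relative_reduction R A B Q"
    and x: "x \<in> carrier R" and "x [^] Suc m \<in> Q \<cdot> ideal_pow R B m"
  shows "relative_reduction R A B (Idl {x})"
proof -
  obtain n where n: "ideal_pow R Q (Suc n) \<subseteq> A \<cdot> ideal_pow R B n"
    using assms(4) unfolding relative_reduction_def by blast
  have Bm: "ideal (ideal_pow R B m) R" by (rule ideal_pow_is_ideal[OF B])
  have "ideal_pow R (Idl {x}) (Suc m * Suc n) = ideal_pow R (ideal_pow R (Idl {x}) (Suc m)) (Suc n)"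
    using x by (simp add: ideal_pow_mult genideal_ideal)
  also have "\<dots> = ideal_pow R (Idl {x [^] Suc m}) (Suc n)"
    using x by (simp only: ideal_pow_genideal_singleton)
  also have "\<dots> \<subseteq> ideal_pow R (Q \<cdot> ideal_pow R B m) (Suc n)"
    using assms(6) Q Bm by (intro ideal_pow_mono genideal_minimal ideal_prod_is_ideal) simp_all
  also have "\<dots> = ideal_pow R Q (Suc n) \<cdot> ideal_pow R B (m * Suc n)"
    by (simp add: ideal_pow_prod_distrib[OF Q Bm] ideal_pow_mult[OF B])
  also have "\<dots> \<subseteq> (A \<cdot> ideal_pow R B n) \<cdot> ideal_pow R B (m * Suc n)"
    by (rule ideal_prod_mono[OF n order_refl])
  also have "\<dots> = A \<cdot> ideal_pow R B (n + m * Suc n)"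
    by (simp only: ideal_prod_assoc[OF A ideal_pow_is_ideal[OF B] ideal_pow_is_ideal[OF B]]
        ideal_pow_add[OF B])
  finally have "ideal_pow R (Idl {x}) (Suc (n + m * Suc n)) \<subseteq> A \<cdot> ideal_pow R B (n + m * Suc n)"
    by (simp add: ac_simps)
  then show ?thesis unfolding relative_reduction_def by blast
qed

lemma relative_reduction_of_square:
  assumes A: "ideal A R" and B: "ideal B R" and X: "ideal X R"
    and "relative_reduction R (A \<cdot> B) (ideal_pow R B 2) (ideal_pow R X 2)"
  shows "relative_reduction R A B X"
proof -
  obtain n where n: "ideal_pow R (ideal_pow R X 2) (Suc n) \<subseteq> (A \<cdot> B) \<cdot> ideal_pow R (ideal_pow R B 2) n"
    using assms(4) unfolding relative_reduction_def by blast
  have "ideal_pow R X (Suc (Suc (2 * n))) = ideal_pow R (ideal_pow R X 2) (Suc n)"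
    by (simp add: ideal_pow_mult[OF X])
  also have "\<dots> \<subseteq> A \<cdot> ideal_pow R B (Suc (2 * n))"
    using n A B ideal_pow_is_ideal[OF B] by (simp add: ideal_pow_mult ideal_pow_Suc ideal_prod_assoc)
  finally show ?thesis unfolding relative_reduction_def by blast
qed

lemma square_mem_genideal_products:
  assumes "finite L" "L \<subseteq> carrier R" "a \<in> L"
  shows "a \<otimes> a \<in> Idl (insert (a \<otimes> finsum R (\<lambda>x. x) L) ((\<otimes>) a ` (L - {a})))"
    (is "_ \<in> Idl ?S")
proof -
  define T where "T = L - {a}"
  have T: "L = insert a T" "a \<notin> T" "finite T" "T \<subseteq> carrier R" "(\<lambda>x. x) \<in> T \<rightarrow> carrier R"
    using assms by (auto simp: T_def)
  have a: "a \<in> carrier R" using assms by auto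
  have S: "?S \<subseteq> carrier R" using assms by (auto intro: finsum_closed)
  have sums: "finsum R (\<lambda>x. x) T \<in> carrier R" "finsum R ((\<otimes>) a) T \<in> carrier R"
    using T(4) a by (auto intro: finsum_closed)
  have "a \<otimes> finsum R (\<lambda>x. x) L = a \<otimes> a \<oplus> finsum R ((\<otimes>) a) T"
    using T a sums finsum_insert[of T a "\<lambda>x. x"] finsum_rdistr[of T a "\<lambda>x. x"] by (simp add: r_distr)
  then have "a \<otimes> a = a \<otimes> finsum R (\<lambda>x. x) L \<ominus> finsum R ((\<otimes>) a) T"
    using a sums by (simp add: a_minus_def a_assoc r_neg)
  moreover have "a \<otimes> finsum R (\<lambda>x. x) L \<in> Idl ?S" using genideal_self[OF S] by simp
  moreover have "finsum R ((\<otimes>) a) T \<in> Idl ?S"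
    using genideal_self[OF S] T(3) by (intro finsum_in_ideal[OF genideal_ideal[OF S]]) (auto simp: T_def)
  ultimately show ?thesis
    using genideal_ideal[OF S]
    by (simp add: a_minus_def additive_subgroup.a_closed additive_subgroup.a_inv_closed ideal.axioms(1))
qed

lemma relative_reduction_summand:
  assumes K: "ideal K R" and I: "ideal I R" and "K \<subseteq> I" "finite L" "L \<subseteq> I" "a \<in> L"
    and sum: "finsum R (\<lambda>x. x) L \<in> K"
    and pairs: "\<And>t. t \<in> L - {a} \<Longrightarrow>
      relative_reduction R (K \<cdot> I) (ideal_pow R I 2) (Idl {a \<otimes> t})"
  shows "relative_reduction R K I (Idl {a})"
proof -
  define g where "g = finsum R (\<lambda>x. x) L"
  define S where "S = insert (a \<otimes> g) ((\<otimes>) a ` (L - {a}))"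
  have carrier: "L \<subseteq> carrier R" "a \<in> carrier R" "g \<in> carrier R"
    using assms(5,6) sum ideal_subset_carrier[OF I] ideal_subset_carrier[OF K] by (auto simp: g_def)
  then have S_carrier: "S \<subseteq> carrier R" by (auto simp: S_def)
  have I2: "ideal (ideal_pow R I 2) R" "ideal_pow R I 2 = I \<cdot> I"
    using I by (simp_all add: ideal_pow_is_ideal numeral_2_eq_2 ideal_pow_Suc ideal_prod_one ideal_prod_is_ideal)
  have KI: "ideal (K \<cdot> I) R" by (rule ideal_prod_is_ideal[OF K I])
  have ag: "a \<otimes> g \<in> K \<cdot> I"
  proof -
    have "g \<otimes> a \<in> K \<cdot> I" using sum assms(5,6) by (auto simp: g_def intro: ideal_prod.prod)
    then show ?thesis using carrier by (simp add: m_comm)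
  qed
  have S: "relative_reduction R (K \<cdot> I) (ideal_pow R I 2) (Idl S)"
  proof (rule relative_reduction_genideal[OF KI I2(1)])
    show "finite S" using assms(4) by (simp add: S_def)
    have "a \<otimes> t \<in> I \<cdot> I" if "t \<in> L" for t
      using that assms(5,6) by (intro ideal_prod.prod) auto
    then show "S \<subseteq> ideal_pow R I 2"
      using ag ideal_prod_mono[OF assms(3) order_refl, of I] by (auto simp: S_def I2(2))
    have "relative_reduction R (K \<cdot> I) (ideal_pow R I 2) (Idl {a \<otimes> g})"
      using ag carrier
      by (intro relative_reduction_of_subset[OF KI]) (simp_all add: genideal_ideal genideal_minimal[OF KI])
    then show "relative_reduction R (K \<cdot> I) (ideal_pow R I 2) (Idl {s})" if "s \<in> S" for s
      using that pairs by (auto simp: S_def)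
  qed
  have "a \<otimes> a \<in> Idl S"
    unfolding S_def g_def by (rule square_mem_genideal_products[OF assms(4) carrier(1) assms(6)])
  then have "ideal_pow R (Idl {a}) 2 \<subseteq> Idl S"
    using carrier
    by (simp add: ideal_pow_genideal_singleton numeral_2_eq_2 genideal_minimal[OF genideal_ideal[OF S_carrier]])
  then have "relative_reduction R (K \<cdot> I) (ideal_pow R I 2) (ideal_pow R (Idl {a}) 2)"
    by (rule relative_reduction_mono[OF _ order_refl S])
  then show ?thesis
    using carrier by (intro relative_reduction_of_square[OF K I]) (simp_all add: genideal_ideal)
qed

lemma relative_reduction_add_layer:
  assumes K: "ideal K R" and I: "ideal I R" and "K \<subseteq> I" "Q \<subseteq> I" "finite L" "L \<subseteq> I"
    and sum: "finsum R (\<lambda>x. x) L \<in> K"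
    and Q: "relative_reduction R K I (Idl Q)"
    and pairs: "\<And>a t. a \<in> L \<Longrightarrow> t \<in> L \<Longrightarrow> a \<noteq> t \<Longrightarrow>
      \<exists>m\<ge>1. (a \<otimes> t) [^] m \<in> (Idl Q) \<cdot> ideal_pow R I (2 * m - 1)"
  shows "relative_reduction R K I (Idl (Q \<union> L))"
proof -
  have carrier: "Q \<subseteq> carrier R" "L \<subseteq> carrier R"
    using assms(4,6) ideal.Icarr[OF I] by auto
  have IdlQ: "ideal (Idl Q) R" "Idl Q \<subseteq> I"
    using carrier assms(4) by (simp_all add: genideal_ideal genideal_minimal[OF I])
  have QI: "relative_reduction R (K \<cdot> I) (ideal_pow R I 2) ((Idl Q) \<cdot> I)"
    by (rule relative_reduction_prod_right[OF K I IdlQ(1) Q])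
  have pair: "relative_reduction R (K \<cdot> I) (ideal_pow R I 2) (Idl {a \<otimes> t})"
    if a: "a \<in> L" and t: "t \<in> L - {a}" for a t
  proof -
    obtain m where "m \<ge> 1" and m: "(a \<otimes> t) [^] m \<in> (Idl Q) \<cdot> ideal_pow R I (2 * m - 1)"
      using pairs a t by blast
    then obtain k where k: "m = Suc k" by (cases m) auto
    \<comment> \<open>(B3) read as integral dependence of \<open>a t\<close> over \<open>Q I\<close>, with \<open>I\<^sup>2\<close> as the graded parameter\<close>
    have "(Idl Q) \<cdot> ideal_pow R I (2 * m - 1) = ((Idl Q) \<cdot> I) \<cdot> ideal_pow R (ideal_pow R I 2) k"
      using IdlQ I ideal_pow_is_ideal[OF I]
      by (simp add: k ideal_pow_mult ideal_pow_Suc ideal_prod_assoc)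
    with m k have "(a \<otimes> t) [^] Suc k \<in> ((Idl Q) \<cdot> I) \<cdot> ideal_pow R (ideal_pow R I 2) k"
      by simp
    moreover have "a \<otimes> t \<in> carrier R" using a t carrier by auto
    ultimately show ?thesis
      using ideal_prod_is_ideal[OF K I] ideal_pow_is_ideal[OF I] ideal_prod_is_ideal[OF IdlQ(1) I]
      by (intro relative_reduction_of_pow_mem[OF _ _ _ QI]) simp_all
  qed
  have "relative_reduction R K I (Idl L)"
  proof (rule relative_reduction_genideal[OF K I assms(5,6)])
    fix a assume a: "a \<in> L"
    show "relative_reduction R K I (Idl {a})"
      by (rule relative_reduction_summand[OF K I assms(3,5,6) a sum pair[OF a]])
  qed
  moreover have "ideal (Idl L) R" "Idl L \<subseteq> I"
    using carrier assms(6) by (simp_all add: genideal_ideal genideal_minimal[OF I])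
  ultimately have "relative_reduction R K I (Idl Q <+>\<^bsub>R\<^esub> Idl L)"
    using relative_reduction_set_add[OF K I IdlQ(1) _ IdlQ(2) _ Q] by blast
  then show ?thesis using carrier by (simp add: genideal_union)
qed

lemma relative_reduction_layers:
  fixes Ps :: "nat \<Rightarrow> 'a set"
  assumes I: "ideal I R"
    and layers: "\<And>l. l \<le> r \<Longrightarrow> finite (Ps l) \<and> Ps l \<subseteq> I"
    and "card (Ps 0) = 1"
    and pairs: "\<And>l a t. 0 < l \<Longrightarrow> l \<le> r \<Longrightarrow> a \<in> Ps l \<Longrightarrow> t \<in> Ps l \<Longrightarrow> a \<noteq> t \<Longrightarrow>
      \<exists>m\<ge>1. (a \<otimes> t) [^] m \<in> (Idl (\<Union>k\<in>{0..<l}. Ps k)) \<cdot> ideal_pow R I (2 * m - 1)"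
  shows "l \<le> r \<Longrightarrow> relative_reduction R (Idl ((\<lambda>k. finsum R (\<lambda>x. x) (Ps k)) ` {0..l})) I
      (Idl (\<Union>k\<in>{0..l}. Ps k))"
proof (induct l)
  case 0
  obtain p where p: "Ps 0 = {p}" using \<open>card (Ps 0) = 1\<close> by (auto simp: card_1_singleton_iff)
  then have "p \<in> carrier R" using layers[of 0] ideal.Icarr[OF I] by auto
  with p show ?case
    by (intro relative_reduction_of_subset) (simp_all add: finsum_insert genideal_ideal)
next
  case (Suc l)
  define g where "g = (\<lambda>k. finsum R (\<lambda>x. x) (Ps k))"
  define K where "K = Idl (g ` {0..Suc l})"
  have layer: "finite (Ps k)" "Ps k \<subseteq> I" if "k \<le> Suc l" for k
    using layers that Suc(2) by simp_all
  have g: "g k \<in> I" if "k \<le> Suc l" for k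
    unfolding g_def using layer[OF that] by (intro finsum_in_ideal[OF I]) auto
  have g_carrier: "g ` {0..Suc l} \<subseteq> carrier R" using g ideal.Icarr[OF I] by auto
  have K: "ideal K R" "K \<subseteq> I" "g (Suc l) \<in> K"
    unfolding K_def using g g_carrier genideal_self[OF g_carrier]
    by (auto simp: genideal_ideal intro!: genideal_minimal[OF I])
  have IH: "relative_reduction R (Idl (g ` {0..l})) I (Idl (\<Union>k\<in>{0..l}. Ps k))"
    using Suc unfolding g_def by simp
  have "Idl (g ` {0..l}) \<subseteq> K"
    unfolding K_def using g_carrier by (intro subset_Idl_subset) auto
  then have "relative_reduction R K I (Idl (\<Union>k\<in>{0..l}. Ps k))"
    by (rule relative_reduction_mono[OF order_refl _ IH])
  moreover have "(\<Union>k\<in>{0..l}. Ps k) \<subseteq> I" by (intro UN_least layer(2)) simp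
  ultimately have "relative_reduction R K I (Idl ((\<Union>k\<in>{0..l}. Ps k) \<union> Ps (Suc l)))"
    using K layer g pairs[of "Suc l"] Suc(2)
    by (intro relative_reduction_add_layer[OF K(1) I]) (auto simp: g_def atLeastLessThanSuc_atLeastAtMost)
  moreover have "(\<Union>k\<in>{0..Suc l}. Ps k) = (\<Union>k\<in>{0..l}. Ps k) \<union> Ps (Suc l)"
    by (auto simp: le_Suc_eq)
  ultimately show ?case by (simp add: K_def g_def)
qed

lemma is_reduction_of_relative_reduction:
  assumes J: "ideal J R" and I: "ideal I R" and "J \<subseteq> I" and "relative_reduction R J I I"
  shows "is_reduction R J I"
proof -
  obtain n where n: "ideal_pow R I (Suc n) \<subseteq> J \<cdot> ideal_pow R I n"
    using assms(4) unfolding relative_reduction_def by blast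
  have "ideal_pow R I (Suc (Suc n)) \<subseteq> I \<cdot> (J \<cdot> ideal_pow R I n)"
    unfolding ideal_pow_Suc[of I "Suc n"] by (rule ideal_prod_mono[OF order_refl n])
  also have "\<dots> = J \<cdot> ideal_pow R I (Suc n)"
    using ideal_prod_left_commute[OF I J ideal_pow_is_ideal[OF I]] by (simp add: ideal_pow_Suc)
  finally have "ideal_pow R I (Suc (Suc n)) = J \<cdot> ideal_pow R I (Suc n)"
    using ideal_prod_mono[OF assms(3) order_refl, of "ideal_pow R I (Suc n)"]
    by (simp add: ideal_pow_Suc[of I "Suc n"])
  then show ?thesis
    unfolding is_reduction_def using J assms(3) by (intro conjI exI[of _ "Suc n"]) auto
qed

end

theorem theorem2p1:
  fixes R (structure) and P :: "'a set" and Ps :: "nat \<Rightarrow> 'a set" and r :: nat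
  assumes "cring R" and "noetherian_ring R" and "\<one>\<^bsub>R\<^esub> \<noteq> \<zero>\<^bsub>R\<^esub>"
    and "finite P" and "P \<subseteq> carrier R"
    and "\<And>l. l \<le> r \<Longrightarrow> Ps l \<subseteq> P"
    and B1: "P = (\<Union>l\<in>{0..r}. Ps l)"
    and B2: "card (Ps 0) = 1"
    and B3: "\<And>l a a''. 0 < l \<Longrightarrow> l \<le> r \<Longrightarrow> a \<in> Ps l \<Longrightarrow> a'' \<in> Ps l \<Longrightarrow> a \<noteq> a'' \<Longrightarrow>
               \<exists>m::nat. m \<ge> 1 \<and>
                 (a \<otimes>\<^bsub>R\<^esub> a'') [^]\<^bsub>R\<^esub> m \<in>
                   ideal_prod R (Idl\<^bsub>R\<^esub> (\<Union>k\<in>{0..<l}. Ps k)) (ideal_pow R (Idl\<^bsub>R\<^esub> P) (2 * m - 1))"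
  shows "is_reduction R (Idl\<^bsub>R\<^esub> ((\<lambda>l. finsum R (\<lambda>a. a) (Ps l)) ` {0..r})) (Idl\<^bsub>R\<^esub> P)"
proof -
  interpret cring R by fact
  let ?J = "Idl ((\<lambda>l. finsum R (\<lambda>a. a) (Ps l)) ` {0..r})"
  have I: "ideal (Idl P) R" and P_I: "P \<subseteq> Idl P"
    using \<open>P \<subseteq> carrier R\<close> by (simp_all add: genideal_ideal genideal_self)
  have layers: "finite (Ps l) \<and> Ps l \<subseteq> Idl P" if "l \<le> r" for l
    using assms(4,6) that P_I finite_subset by blast
  have "relative_reduction R ?J (Idl P) (Idl P)"
    using relative_reduction_layers[where l = r, OF I layers B2 B3] by (simp add: B1[symmetric])
  moreover have gens: "(\<lambda>l. finsum R (\<lambda>a. a) (Ps l)) ` {0..r} \<subseteq> Idl P"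
  proof (rule image_subsetI)
    fix l assume "l \<in> {0..r}"
    then show "finsum R (\<lambda>a. a) (Ps l) \<in> Idl P"
      using layers[of l] by (intro finsum_in_ideal[OF I]) auto
  qed
  moreover have "ideal ?J R"
    using gens ideal_subset_carrier[OF I] by (intro genideal_ideal) (rule subset_trans)
  ultimately show ?thesis
    using I by (intro is_reduction_of_relative_reduction genideal_minimal)
qed
end
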